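(* Let $T$ be a complete theory and $R(x,y)$ a binary relation (formula) of $T$. Suppose that for some $0<\delta<1$ and for all $\epsilon$ with $0<\epsilon<1$ and all $n\in\mathbb{N}$ there is a finite bipartite $R$-graph $(X,Y)$ with $|X|=|Y|\geq n$ which is $\epsilon$-regular with density $d$, where $|d-\delta|<\epsilon$. Then $R$ has the order property.
   Context: Work in a sufficiently saturated model of $T$. A finite bipartite $R$-graph $(X,Y)$ consists of disjoint finite sets $X,Y$ of tuples of the appropriate lengths, with an edge between $x\in X$ and $y\in Y$ iff $R(x,y)$. Its density is $e(X,Y)/|X||Y|$ where $e(X,Y)$ is the number of edges. $(X,Y)$ is $\epsilon$-regular if for all $X'\subseteq X$, $Y'\subseteq Y$ with $|X'|\ge\epsilon|X|$, $|Y'|\ge\epsilon|Y|$, the densities of $(X,Y)$ and $(X',Y')$ differ by less than $\epsilon$. $R$ has the order property if there are $\langle a_i,b_i:i<\omega\rangle$ with $R(a_i,b_j)$ iff $i<j$. *)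

theory Defs
  imports Complex_Main
begin

text \<open>The relation R(x,y) is modelled as a predicate on the interpretations in the
  (saturated) model: x-tuples range over type 'a, y-tuples over type 'b.\<close>

definition edges :: "('a \<Rightarrow> 'b \<Rightarrow> bool) \<Rightarrow> 'a set \<Rightarrow> 'b set \<Rightarrow> nat" where
  "edges R X Y = card {(x, y). x \<in> X \<and> y \<in> Y \<and> R x y}"

definition density :: "('a \<Rightarrow> 'b \<Rightarrow> bool) \<Rightarrow> 'a set \<Rightarrow> 'b set \<Rightarrow> real" where
  "density R X Y = real (edges R X Y) / (real (card X) * real (card Y))"

definition eps_regular :: "real \<Rightarrow> ('a \<Rightarrow> 'b \<Rightarrow> bool) \<Rightarrow> 'a set \<Rightarrow> 'b set \<Rightarrow> bool" where
  "eps_regular \<epsilon> R X Y \<longleftrightarrow>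
     (\<forall>X' Y'. X' \<subseteq> X \<longrightarrow> Y' \<subseteq> Y \<longrightarrow>
        real (card X') \<ge> \<epsilon> * real (card X) \<longrightarrow> real (card Y') \<ge> \<epsilon> * real (card Y) \<longrightarrow>
        \<bar>density R X Y - density R X' Y'\<bar> < \<epsilon>)"

definition order_property :: "('a \<Rightarrow> 'b \<Rightarrow> bool) \<Rightarrow> bool" where
  "order_property R \<longleftrightarrow> (\<exists>(a :: nat \<Rightarrow> 'a) (b :: nat \<Rightarrow> 'b). \<forall>i j. R (a i) (b j) \<longleftrightarrow> i < j)"

text \<open>The consequence of saturation that is relevant here: every countable
  R-configuration (a pattern of R / not-R between countably many x-tuples and
  y-tuples) that is finitely realized in the model is realized in the model.
  Every \<omega>-saturated model (in particular any sufficiently saturated one) has this property.\<close>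

definition R_saturated :: "('a \<Rightarrow> 'b \<Rightarrow> bool) \<Rightarrow> bool" where
  "R_saturated R \<longleftrightarrow>
     (\<forall>P :: nat \<Rightarrow> nat \<Rightarrow> bool.
        (\<forall>k. \<exists>(a :: nat \<Rightarrow> 'a) (b :: nat \<Rightarrow> 'b). \<forall>i<k. \<forall>j<k. R (a i) (b j) \<longleftrightarrow> P i j) \<longrightarrow>
        (\<exists>(a :: nat \<Rightarrow> 'a) (b :: nat \<Rightarrow> 'b). \<forall>i j. R (a i) (b j) \<longleftrightarrow> P i j))"

end

theory Submission
  imports Defs
begin

text \<open>
  Fix c > 0 with c + \<epsilon> \<le> density R X Y \<le> 1 - c - \<epsilon> in an \<epsilon>-regular graph (X, Y).
  By regularity, for any C \<subseteq> Y with |C| \<ge> \<epsilon>|Y| fewer than \<epsilon>|X| vertices of X have fewer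
  than c|C| neighbours in C, and likewise for non-neighbours. Hence, for k such sets with
  2k\<epsilon> \<le> 1, a union bound yields a vertex with at least c|C| neighbours and c|C|
  non-neighbours in each of them. Choosing a_0, ..., a_{k-1} one at a time in this way keeps
  each of the k cells {y. R(a_i, y) \<longleftrightarrow> i < j} of size at least c^k |Y| > 0, as long as
  \<epsilon> \<le> c^k; a point b_j of the j-th cell completes a half graph of size k. Half graphs of
  every finite size are thus realized, and saturation realizes an infinite one.
\<close>

lemma edges_eq_sum_degrees:
  assumes "finite X" "finite Y"
  shows "edges R X Y = (\<Sum>x\<in>X. card {y\<in>Y. R x y})"
proof -
  have "{(x, y). x \<in> X \<and> y \<in> Y \<and> R x y} = Sigma X (\<lambda>x. {y\<in>Y. R x y})" by auto
  then show ?thesis unfolding edges_def using assms by simp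
qed

lemma edges_add_edges_complement:
  assumes "finite X" "finite Y"
  shows "edges R X Y + edges (\<lambda>x y. \<not> R x y) X Y = card X * card Y"
proof -
  have "X \<times> Y = {(x, y). x \<in> X \<and> y \<in> Y \<and> R x y} \<union> {(x, y). x \<in> X \<and> y \<in> Y \<and> \<not> R x y}"
    by auto
  moreover have "finite (X \<times> Y)" using assms by simp
  ultimately have "card (X \<times> Y) = edges R X Y + edges (\<lambda>x y. \<not> R x y) X Y"
    unfolding edges_def by (subst card_Un_disjoint[symmetric]) (auto intro: finite_subset)
  then show ?thesis by (simp add: card_cartesian_product)
qed

lemma density_complement:
  assumes "finite X" "finite Y" "X \<noteq> {}" "Y \<noteq> {}"
  shows "density (\<lambda>x y. \<not> R x y) X Y = 1 - density R X Y"
proof -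
  have "real (card X) * real (card Y) \<noteq> 0" using assms by simp
  moreover have "real (edges (\<lambda>x y. \<not> R x y) X Y) = real (card X) * real (card Y) - real (edges R X Y)"
    using edges_add_edges_complement[OF assms(1,2), of R] by (simp flip: of_nat_add of_nat_mult)
  ultimately show ?thesis unfolding density_def by (simp add: field_simps)
qed

lemma eps_regular_complement:
  assumes "0 < \<epsilon>" "finite X" "finite Y" "eps_regular \<epsilon> R X Y"
  shows "eps_regular \<epsilon> (\<lambda>x y. \<not> R x y) X Y"
  unfolding eps_regular_def
proof (intro allI impI)
  fix X' Y' assume sub: "X' \<subseteq> X" "Y' \<subseteq> Y"
    and big: "\<epsilon> * card X \<le> card X'" "\<epsilon> * card Y \<le> card Y'"
  show "\<bar>density (\<lambda>x y. \<not> R x y) X Y - density (\<lambda>x y. \<not> R x y) X' Y'\<bar> < \<epsilon>"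
  proof (cases "X = {} \<or> Y = {}")
    case True
    then have "card X = 0 \<or> card Y = 0" "card X' = 0 \<or> card Y' = 0" using sub by auto
    then show ?thesis using \<open>0 < \<epsilon>\<close> by (auto simp: density_def)
  next
    case False
    have fin': "finite X'" "finite Y'" using sub assms(2,3) finite_subset by auto
    have "0 < \<epsilon> * card X" "0 < \<epsilon> * card Y"
      using False assms(1-3) by (simp_all add: card_gt_0_iff)
    then have "X' \<noteq> {}" "Y' \<noteq> {}" using big by auto
    moreover have "\<bar>density R X Y - density R X' Y'\<bar> < \<epsilon>"
      using assms(4) sub big unfolding eps_regular_def by blast
    ultimately show ?thesis
      using False fin' assms(2,3) by (simp add: density_complement abs_minus_commute)
  qed
qed

lemma exists_outside_small_sets:
  fixes e :: real
  assumes "finite X" "X \<noteq> {}" "finite J"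
    and sub: "\<And>j. j \<in> J \<Longrightarrow> B j \<subseteq> X"
    and small: "\<And>j. j \<in> J \<Longrightarrow> card (B j) < e * card X"
    and "card J * e \<le> 1"
  shows "\<exists>x\<in>X. \<forall>j\<in>J. x \<notin> B j"
proof -
  have "card (\<Union>j\<in>J. B j) < card X"
  proof (cases "J = {}")
    case True
    then show ?thesis using assms(1,2) by (simp add: card_gt_0_iff)
  next
    case False
    have "real (card (\<Union>j\<in>J. B j)) \<le> (\<Sum>j\<in>J. real (card (B j)))"
      using card_UN_le[OF \<open>finite J\<close>, of B] by (simp flip: of_nat_sum)
    also have "\<dots> < (\<Sum>j\<in>J. e * card X)"
      using False \<open>finite J\<close> small by (intro sum_strict_mono) auto
    also have "\<dots> = (card J * e) * card X" by simp
    also have "\<dots> \<le> 1 * real (card X)"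
      using \<open>card J * e \<le> 1\<close> by (intro mult_right_mono) auto
    finally show ?thesis by simp
  qed
  then have "(\<Union>j\<in>J. B j) \<subset> X"
    using sub by (intro card_psubset[OF \<open>finite X\<close>]) auto
  then show ?thesis by blast
qed

text \<open>The j-th cell is where b_j must lie for a_0, ..., a_{m-1} to extend to a half graph.\<close>

definition ladder_cell :: "('a \<Rightarrow> 'b \<Rightarrow> bool) \<Rightarrow> (nat \<Rightarrow> 'a) \<Rightarrow> nat \<Rightarrow> 'b set \<Rightarrow> nat \<Rightarrow> 'b set"
  where "ladder_cell R a m Y j = {y\<in>Y. \<forall>i<m. R (a i) y \<longleftrightarrow> i < j}"

lemma ladder_cell_Suc:
  "ladder_cell R (a(m := x)) (Suc m) Y j = {y\<in>ladder_cell R a m Y j. R x y \<longleftrightarrow> m < j}"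
  unfolding ladder_cell_def by (auto simp: less_Suc_eq)

locale regular_pair =
  fixes R :: "'a \<Rightarrow> 'b \<Rightarrow> bool" and X :: "'a set" and Y :: "'b set" and \<epsilon> :: real
  assumes finite: "finite X" "finite Y"
    and nonempty: "X \<noteq> {}" "Y \<noteq> {}"
    and eps_pos: "0 < \<epsilon>"
    and regular: "eps_regular \<epsilon> R X Y"
begin

lemma complement: "regular_pair (\<lambda>x y. \<not> R x y) X Y \<epsilon>"
  using finite nonempty eps_pos eps_regular_complement[OF eps_pos finite regular]
  by unfold_locales

lemma card_pos: "0 < card X" "0 < card Y"
  using finite nonempty by (simp_all add: card_gt_0_iff)

lemma few_low_degree_vertices:
  fixes c :: real
  assumes dens: "c + \<epsilon> \<le> density R X Y"
    and C: "C \<subseteq> Y" "\<epsilon> * card Y \<le> card C"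
  shows "card {x\<in>X. real (card {y\<in>C. R x y}) < c * card C} < \<epsilon> * card X"
proof (rule ccontr)
  define B where "B = {x\<in>X. real (card {y\<in>C. R x y}) < c * card C}"
  assume "\<not> ?thesis"
  then have B: "\<epsilon> * card X \<le> card B" unfolding B_def by simp
  have "0 < \<epsilon> * card X" "0 < \<epsilon> * card Y"
    using card_pos eps_pos by simp_all
  then have "0 < card B" "0 < card C"
    using B C by linarith+
  have fin: "finite B" "finite C"
    using finite C unfolding B_def by (auto intro: finite_subset)
  have "real (edges R B C) = (\<Sum>x\<in>B. real (card {y\<in>C. R x y}))"
    by (simp add: edges_eq_sum_degrees[OF fin])
  also have "\<dots> < (\<Sum>x\<in>B. c * card C)"
    using \<open>0 < card B\<close> fin by (intro sum_strict_mono) (auto simp: B_def card_gt_0_iff)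
  also have "\<dots> = c * (card B * card C)" by simp
  finally have "density R B C < c"
    unfolding density_def using \<open>0 < card B\<close> \<open>0 < card C\<close> by (simp add: divide_less_eq)
  moreover have "\<bar>density R X Y - density R B C\<bar> < \<epsilon>"
    using regular C B unfolding eps_regular_def B_def by auto
  ultimately show False using dens by linarith
qed

lemma exists_splitting_vertex:
  fixes c :: real
  assumes dens: "c + \<epsilon> \<le> density R X Y" "density R X Y \<le> 1 - c - \<epsilon>"
    and J: "finite J" "2 * real (card J) * \<epsilon> \<le> 1"
    and C: "\<And>j. j \<in> J \<Longrightarrow> C j \<subseteq> Y" "\<And>j. j \<in> J \<Longrightarrow> \<epsilon> * card Y \<le> card (C j)"
  shows "\<exists>x\<in>X. \<forall>j\<in>J. c * card (C j) \<le> card {y\<in>C j. R x y}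
                      \<and> c * card (C j) \<le> card {y\<in>C j. \<not> R x y}"
proof -
  define L where "L j = {x\<in>X. real (card {y\<in>C j. R x y}) < c * card (C j)}" for j
  define H where "H j = {x\<in>X. real (card {y\<in>C j. \<not> R x y}) < c * card (C j)}" for j
  have "c + \<epsilon> \<le> density (\<lambda>x y. \<not> R x y) X Y"
    using dens(2) finite nonempty by (simp add: density_complement)
  then have small: "card (L j) < \<epsilon> * card X" "card (H j) < \<epsilon> * card X" if "j \<in> J" for j
    unfolding L_def H_def using C that dens(1)
    by (blast intro: few_low_degree_vertices regular_pair.few_low_degree_vertices[OF complement])+
  have union: "real (card (L j \<union> H j)) \<le> real (card (L j)) + real (card (H j))" for j
    by (metis card_Un_le of_nat_add of_nat_le_iff)
  have "card (L j \<union> H j) < (2 * \<epsilon>) * card X" if "j \<in> J" for j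
    using small[OF that] union[of j] by linarith
  moreover have "L j \<union> H j \<subseteq> X" for j unfolding L_def H_def by auto
  ultimately obtain x where "x \<in> X" "\<forall>j\<in>J. x \<notin> L j \<union> H j"
    using exists_outside_small_sets[OF finite(1) nonempty(1) J(1),
        where B = "\<lambda>j. L j \<union> H j" and e = "2 * \<epsilon>"] J(2)
    by (auto simp: mult.assoc)
  then show ?thesis unfolding L_def H_def by (auto simp: not_less)
qed

lemma large_ladder_cells:
  fixes c :: real
  assumes c: "0 < c"
    and dens: "c + \<epsilon> \<le> density R X Y" "density R X Y \<le> 1 - c - \<epsilon>"
    and k: "2 * real k * \<epsilon> \<le> 1" "\<epsilon> \<le> c ^ k"
  shows "m \<le> k \<Longrightarrow> \<exists>a. \<forall>j<k. c ^ m * card Y \<le> card (ladder_cell R a m Y j)"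
proof (induction m)
  case 0
  then show ?case by (simp add: ladder_cell_def)
next
  case (Suc m)
  then obtain a where a: "\<And>j. j < k \<Longrightarrow> c ^ m * card Y \<le> card (ladder_cell R a m Y j)"
    by auto
  have "c \<le> 1" using dens eps_pos by linarith
  then have "c ^ k \<le> c ^ m"
    using Suc.prems c by (intro power_decreasing) auto
  then have "\<epsilon> * card Y \<le> c ^ m * card Y"
    using k(2) by (intro mult_right_mono) auto
  then obtain x where x: "\<forall>j\<in>{..<k}.
      c * card (ladder_cell R a m Y j) \<le> card {y\<in>ladder_cell R a m Y j. R x y}
    \<and> c * card (ladder_cell R a m Y j) \<le> card {y\<in>ladder_cell R a m Y j. \<not> R x y}"
    using exists_splitting_vertex[OF dens, of "{..<k}" "ladder_cell R a m Y"] k(1) a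
    by (fastforce simp: ladder_cell_def)
  have "c ^ Suc m * card Y \<le> card (ladder_cell R (a(m := x)) (Suc m) Y j)" if "j < k" for j
  proof -
    have "c ^ Suc m * card Y = c * (c ^ m * card Y)" by simp
    also have "\<dots> \<le> c * card (ladder_cell R a m Y j)"
      using a[OF that] c by (intro mult_left_mono) auto
    also have "\<dots> \<le> card (ladder_cell R (a(m := x)) (Suc m) Y j)"
      using x that by (cases "m < j") (simp_all add: ladder_cell_Suc)
    finally show ?thesis .
  qed
  then show ?case by blast
qed

lemma exists_half_graph:
  fixes c :: real
  assumes c: "0 < c"
    and dens: "c + \<epsilon> \<le> density R X Y" "density R X Y \<le> 1 - c - \<epsilon>"
    and k: "2 * real k * \<epsilon> \<le> 1" "\<epsilon> \<le> c ^ k"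
  shows "\<exists>a b. \<forall>i<k. \<forall>j<k. R (a i) (b j) \<longleftrightarrow> i < j"
proof -
  obtain a where a: "\<And>j. j < k \<Longrightarrow> c ^ k * card Y \<le> card (ladder_cell R a k Y j)"
    using large_ladder_cells[OF c dens k order_refl] by blast
  define b where "b j = (SOME y. y \<in> ladder_cell R a k Y j)" for j
  have "b j \<in> ladder_cell R a k Y j" if "j < k" for j
  proof -
    have "0 < c ^ k * card Y" using c card_pos by simp
    then have "ladder_cell R a k Y j \<noteq> {}" using a[OF that] by fastforce
    then show ?thesis unfolding b_def by (rule some_in_eq[THEN iffD2])
  qed
  then have "\<forall>i<k. \<forall>j<k. R (a i) (b j) \<longleftrightarrow> i < j" by (simp add: ladder_cell_def)
  then show ?thesis by blast
qed

end

lemma exists_eps_below_powers: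
  fixes c :: real
  assumes "0 < c" "c < 1"
  shows "\<exists>\<epsilon>>0. \<epsilon> < 1 \<and> \<epsilon> \<le> c \<and> \<epsilon> \<le> c ^ k \<and> 2 * real k * \<epsilon> \<le> 1"
proof -
  define \<epsilon> where "\<epsilon> = c ^ Suc k / (2 * k + 2)"
  have ck: "0 < c ^ Suc k" "c ^ Suc k \<le> c" "c ^ Suc k \<le> c ^ k"
    using assms by (simp_all add: power_le_one mult_left_le_one_le)
  have "0 < \<epsilon>" "\<epsilon> \<le> c ^ Suc k" "2 * real k * \<epsilon> \<le> c ^ Suc k"
    using ck by (simp_all add: \<epsilon>_def field_simps)
  then have "0 < \<epsilon> \<and> \<epsilon> < 1 \<and> \<epsilon> \<le> c \<and> \<epsilon> \<le> c ^ k \<and> 2 * real k * \<epsilon> \<le> 1"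
    using ck assms by linarith
  then show ?thesis by blast
qed

theorem mainTheorem4:
  fixes R :: "'a \<Rightarrow> 'b \<Rightarrow> bool" and \<delta> :: real
  assumes sat: "R_saturated R"
    and delta: "0 < \<delta>" "\<delta> < 1"
    and graphs: "\<forall>\<epsilon>::real. 0 < \<epsilon> \<and> \<epsilon> < 1 \<longrightarrow> (\<forall>n::nat.
        \<exists>(X :: 'a set) (Y :: 'b set). finite X \<and> finite Y \<and> card X = card Y \<and> card X \<ge> n \<and>
          eps_regular \<epsilon> R X Y \<and> \<bar>density R X Y - \<delta>\<bar> < \<epsilon>)"
  shows "order_property R"
proof -
  define c where "c = min \<delta> (1 - \<delta>) / 4"
  have c: "0 < c" "c < 1" "4 * c \<le> \<delta>" "4 * c \<le> 1 - \<delta>"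
    using delta by (auto simp: c_def)
  have "\<exists>a b. \<forall>i<k. \<forall>j<k. R (a i) (b j) \<longleftrightarrow> i < j" for k :: nat
  proof -
    obtain \<epsilon> where \<epsilon>: "0 < \<epsilon>" "\<epsilon> < 1" "\<epsilon> \<le> c" "\<epsilon> \<le> c ^ k" "2 * real k * \<epsilon> \<le> 1"
      using exists_eps_below_powers[OF c(1,2), of k] by blast
    then obtain X :: "'a set" and Y :: "'b set" where
      G: "finite X" "finite Y" "card X = card Y" "card X \<ge> 1"
        "eps_regular \<epsilon> R X Y" "\<bar>density R X Y - \<delta>\<bar> < \<epsilon>"
      using graphs \<epsilon>(1,2) by (metis (lifting))
    then interpret regular_pair R X Y \<epsilon>
      using \<epsilon>(1) by unfold_locales auto
    have "c + \<epsilon> \<le> density R X Y" "density R X Y \<le> 1 - c - \<epsilon>"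
      using G(6) c(3,4) \<epsilon>(3) by (simp_all add: abs_less_iff)
    then show ?thesis
      using exists_half_graph c(1) \<epsilon>(4,5) by blast
  qed
  then show ?thesis
    using sat[unfolded R_saturated_def, rule_format, of "\<lambda>i j. i < j"]
    unfolding order_property_def by (metis (lifting))
qed

end
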